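(* Let $s\ge 1$, $q=4^{2s}$, and let $\theta$ be the automorphism of $F_q$ given by $\theta(a)=a^{4^s}$. Let $h(x)\in F_q[x;\theta]$ be a palindromic polynomial of degree $t$. (1) If $t$ is odd, then its skew reciprocal polynomial $h^R(x)$ is a $\theta$-palindromic polynomial. (2) If $t$ is even, then $h^R(x)$ is also a palindromic polynomial.
   Context: $F_q[x;\theta]$ is the skew polynomial ring: polynomials $\sum a_ix^i$ with $a_i\in F_q$, usual addition, and multiplication determined by $xa=\theta(a)x$ for $a\in F_q$. For $f(x)=\sum_{i=0}^t a_ix^i$ of degree $t$, the skew reciprocal polynomial is $f^R(x)=\sum_{i=0}^t x^ia_{t-i}=\sum_{i=0}^t\theta^i(a_{t-i})x^i$. A polynomial $f(x)=a_0+\dots+a_tx^t$ of degree $t$ is palindromic if $a_i=a_{t-i}$ for all $i$, and $\theta$-palindromic if $a_i=\theta(a_{t-i})$ for all $i$. *)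

theory Defs
  imports "HOL-Computational_Algebra.Polynomial" "HOL-Library.Cardinality"
begin

text \<open>Elements of the skew polynomial ring F[x;theta] are represented by their
coefficient sequences, i.e. as values of type 'a poly (same additive structure,
same coefficients and degree); the skew multiplication is not needed for the
statement, which concerns coefficients only.\<close>

definition skew_reciprocal :: "('a::zero \<Rightarrow> 'a) \<Rightarrow> 'a poly \<Rightarrow> 'a poly" where
  "skew_reciprocal \<theta> f =
     Poly (map (\<lambda>i. (\<theta> ^^ i) (coeff f (degree f - i))) [0..<Suc (degree f)])"

definition palindromic :: "'a::zero poly \<Rightarrow> bool" where
  "palindromic f \<longleftrightarrow> (\<forall>i\<le>degree f. coeff f i = coeff f (degree f - i))"

definition theta_palindromic :: "('a::zero \<Rightarrow> 'a) \<Rightarrow> 'a poly \<Rightarrow> bool" where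
  "theta_palindromic \<theta> f \<longleftrightarrow> (\<forall>i\<le>degree f. coeff f i = \<theta> (coeff f (degree f - i)))"

end

theory Submission
  imports Defs
begin

text \<open>For a palindromic h of degree t, the i-th coefficient of the skew reciprocal
  is theta^i (h_(t-i)) = theta^i (h_i). Since q = (4^s)^2, Fermat's little theorem in F_q makes
  theta an involution, so theta^i depends only on the parity of i. The coefficients at i
  and t - i therefore carry the same power of theta exactly when t is even, and powers
  differing by one theta when t is odd.\<close>

lemma field_power_card:
  fixes a :: "'a::{finite,field}"
  shows "a ^ CARD('a) = a"
proof (cases "a = 0")
  case True
  then show ?thesis by (simp add: power_0_left)
next
  case False
  let ?U = "UNIV - {0::'a}"
  have "bij_betw ((*) a) ?U ?U"
  proof (rule bij_betw_imageI)
    show "inj_on ((*) a) ?U" using False by (auto simp: inj_on_def)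
    show "(*) a ` ?U = ?U"
    proof
      show "?U \<subseteq> (*) a ` ?U"
        using False by (auto intro!: image_eqI[where x = "_ / a"])
    qed (use False in auto)
  qed
  then have "(\<Prod>x\<in>?U. a * x) = (\<Prod>x\<in>?U. x)"
    using prod.reindex_bij_betw[of "(*) a" ?U ?U "\<lambda>x. x"] by simp
  then have "a ^ card ?U * (\<Prod>x\<in>?U. x) = 1 * (\<Prod>x\<in>?U. x)"
    by (simp add: prod.distrib)
  then have "a ^ card ?U = 1" by simp
  moreover have "CARD('a) = Suc (card ?U)"
    by (simp add: card_Diff_singleton)
  ultimately show ?thesis by (simp only: power_Suc mult_1_right)
qed

lemma power_power_eq_self_if_square_card:
  fixes a :: "'a::{finite,field}"
  assumes "CARD('a) = m * m"
  shows "(a ^ m) ^ m = a"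
  by (simp add: power_mult[symmetric] assms[symmetric] field_power_card)

lemma funpow_involution:
  assumes "\<And>a. \<theta> (\<theta> a) = a"
  shows "(\<theta> ^^ i) a = (if even i then a else \<theta> a)"
  by (induction i) (auto simp: assms)

lemma coeff_skew_reciprocal:
  "coeff (skew_reciprocal \<theta> f) i =
     (if i \<le> degree f then (\<theta> ^^ i) (coeff f (degree f - i)) else 0)"
  unfolding skew_reciprocal_def
  by (simp add: coeff_Poly_eq nth_default_def less_Suc_eq_le del: upt_Suc)

lemma palindromic_coeff_degree_diff:
  assumes "palindromic f" and "i \<le> degree f"
  shows "coeff f (degree f - i) = coeff f i"
  using assms unfolding palindromic_def by (metis diff_diff_cancel diff_le_self)

lemma coeff_skew_reciprocal_palindromic:
  assumes "palindromic f"
  shows "coeff (skew_reciprocal \<theta> f) i =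
           (if i \<le> degree f then (\<theta> ^^ i) (coeff f i) else 0)"
  by (simp add: coeff_skew_reciprocal palindromic_coeff_degree_diff[OF assms])

lemma degree_skew_reciprocal:
  assumes "\<And>a. \<theta> a = 0 \<longleftrightarrow> a = 0" and "coeff f 0 \<noteq> 0"
  shows "degree (skew_reciprocal \<theta> f) = degree f"
proof (rule antisym)
  have funpow_eq_0: "(\<theta> ^^ i) a = 0 \<longleftrightarrow> a = 0" for i a
    by (induction i) (simp_all add: assms(1))
  show "degree (skew_reciprocal \<theta> f) \<le> degree f"
    by (rule degree_le) (simp add: coeff_skew_reciprocal)
  have "coeff (skew_reciprocal \<theta> f) (degree f) \<noteq> 0"
    using assms(2) by (simp add: coeff_skew_reciprocal funpow_eq_0)
  then show "degree f \<le> degree (skew_reciprocal \<theta> f)"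
    by (rule le_degree)
qed

lemma skew_reciprocal_palindromic_involution:
  assumes invol: "\<And>a. \<theta> (\<theta> a) = a" and "\<theta> 0 = 0" and "palindromic f"
  shows "odd (degree f) \<Longrightarrow> theta_palindromic \<theta> (skew_reciprocal \<theta> f)"
    and "even (degree f) \<Longrightarrow> palindromic (skew_reciprocal \<theta> f)"
proof -
  note pal = palindromic_coeff_degree_diff[OF \<open>palindromic f\<close>]
  have degree: "degree (skew_reciprocal \<theta> f) = degree f"
  proof (cases "f = 0")
    case True
    then show ?thesis by (simp add: skew_reciprocal_def \<open>\<theta> 0 = 0\<close>)
  next
    case False
    have "\<theta> a = 0 \<longleftrightarrow> a = 0" for a
      using invol \<open>\<theta> 0 = 0\<close> by metis
    moreover have "coeff f 0 \<noteq> 0"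
      using False pal[of "degree f"] by simp
    ultimately show ?thesis by (rule degree_skew_reciprocal)
  qed
  note coeff = coeff_skew_reciprocal_palindromic[OF \<open>palindromic f\<close>]
    funpow_involution[OF invol]
  show "odd (degree f) \<Longrightarrow> theta_palindromic \<theta> (skew_reciprocal \<theta> f)"
    unfolding theta_palindromic_def degree by (auto simp: coeff invol pal)
  show "even (degree f) \<Longrightarrow> palindromic (skew_reciprocal \<theta> f)"
    unfolding palindromic_def degree by (auto simp: coeff pal)
qed

theorem theorem5:
  fixes s t :: nat and h :: "'a::{finite,field} poly" and \<theta> :: "'a \<Rightarrow> 'a"
  assumes "s \<ge> 1"
    and "CARD('a) = 4 ^ (2 * s)"
    and "\<theta> = (\<lambda>a. a ^ (4 ^ s))"
    and "palindromic h"
    and "degree h = t"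
  shows "(odd t \<longrightarrow> theta_palindromic \<theta> (skew_reciprocal \<theta> h))
       \<and> (even t \<longrightarrow> palindromic (skew_reciprocal \<theta> h))"
proof -
  have "CARD('a) = 4 ^ s * 4 ^ s"
    unfolding assms(2) mult_2 power_add ..
  then have "\<theta> (\<theta> a) = a" for a
    using assms(3) by (simp add: power_power_eq_self_if_square_card)
  moreover have "\<theta> 0 = 0"
    using assms(3) by simp
  ultimately show ?thesis
    using skew_reciprocal_palindromic_involution assms(4,5) by blast
qed

end
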